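(* Let $A\in\mathbb{R}^{m\times n}$, $b\in\mathbb{R}^m$ and $\delta\ge 0$, and assume $\{x\in\mathbb{R}^n:\|Ax-b\|\le\delta\}\neq\emptyset$. Then for every $\rho>0$ the problem $$\min_{x,v\in\mathbb{R}^n}\{\langle e,e-v\rangle+\rho\langle v,|x|\rangle:\ \|Ax-b\|\le\delta,\ 0\le v\le e\}$$ has a nonempty set of (globally) optimal solutions.
   Context: $\|\cdot\|$ is the Euclidean norm, $e\in\mathbb{R}^n$ is the all-ones vector, $|x|$ is the componentwise absolute value, and vector inequalities are componentwise. *)

theory Defs
  imports "HOL-Analysis.Analysis"
begin

definition obj :: "real \<Rightarrow> real^'n \<Rightarrow> real^'n \<Rightarrow> real" where
  "obj \<rho> x v = (\<chi> i. 1) \<bullet> ((\<chi> i. 1) - v) + \<rho> * (v \<bullet> (\<chi> i. \<bar>x $ i\<bar>))"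

definition feasible :: "real^'n^'m \<Rightarrow> real^'m \<Rightarrow> real \<Rightarrow> real^'n \<Rightarrow> real^'n \<Rightarrow> bool" where
  "feasible A b \<delta> x v \<longleftrightarrow> norm (A *v x - b) \<le> \<delta> \<and> (\<forall>i. 0 \<le> v $ i \<and> v $ i \<le> 1)"

end

theory Submission
  imports Defs
begin

text \<open>Minimising over \<open>v\<close> first reduces the problem to minimising the capped \<open>\<ell>\<^sub>1\<close> function
  \<open>\<Sum>\<^sub>i min 1 (\<rho> \<bar>x\<^sub>i\<bar>)\<close> over the feasible set \<open>K\<close>, the optimal \<open>v\<close> being the indicator of
  \<open>{i. \<rho> \<bar>x\<^sub>i\<bar> < 1}\<close>. This function is not coercive, but it is the minimum over all index
  sets \<open>T\<close> of \<open>card (-T) + \<rho> \<Sum>\<^sub>i\<^sub>\<in>\<^sub>T \<bar>x\<^sub>i\<bar>\<close>. Each of these finitely many functions attains its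
  minimum on \<open>K\<close>, because the image of \<open>K\<close> under the coordinate projection onto \<open>T\<close> is closed
  (a linear image of the preimage of a compact ball), and on that image the function is
  coercive. The best of these finitely many minimisers minimises the capped function.\<close>

lemma closed_linear_image_vimage_compact:
  fixes f :: "'a::euclidean_space \<Rightarrow> 'b::euclidean_space" and g :: "'a \<Rightarrow> 'c::euclidean_space"
  assumes "linear f" "linear g" "compact C"
  shows "closed (f ` (g -` C))"
proof -
  let ?S = "range (\<lambda>x. (f x, g x))"
  have "linear (\<lambda>x. (f x, g x))"
    using assms(1,2) by (simp add: linear_iff)
  then have "closed ?S"
    using closed_subspace linear_subspace_image subspace_UNIV by blast
  then have "closedin (top_of_set (UNIV \<times> C)) ((UNIV \<times> C) \<inter> ?S)"
    by (rule closedin_closed_Int)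
  then have "closedin (top_of_set UNIV) (fst ` ((UNIV \<times> C) \<inter> ?S))"
    by (rule Starlike.closed_map_fst[OF assms(3)])
  moreover have "fst ` ((UNIV \<times> C) \<inter> ?S) = f ` (g -` C)"
    by force
  ultimately show ?thesis
    by (simp only: subtopology_UNIV closed_closedin)
qed

lemma closed_attains_inf_coercive:
  fixes q :: "'a::{heine_borel,real_normed_vector} \<Rightarrow> real"
  assumes "closed S" "S \<noteq> {}" "continuous_on S q" "\<And>z. z \<in> S \<Longrightarrow> norm z \<le> q z"
  shows "\<exists>z\<in>S. \<forall>y\<in>S. q z \<le> q y"
proof -
  obtain z0 where z0: "z0 \<in> S"
    using assms(2) by blast
  define C where "C = S \<inter> cball 0 (q z0)"
  have "compact C"
    unfolding C_def using assms(1) compact_cball by (rule closed_Int_compact)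
  moreover have "z0 \<in> C"
    using z0 assms(4)[OF z0] by (simp add: C_def)
  moreover have "continuous_on C q"
    by (rule continuous_on_subset[OF assms(3)]) (simp add: C_def)
  ultimately obtain z where z: "z \<in> C" "\<And>y. y \<in> C \<Longrightarrow> q z \<le> q y"
    by (metis continuous_attains_inf empty_iff)
  have "q z \<le> q y" if "y \<in> S" for y
  proof (cases "y \<in> C")
    case True
    then show ?thesis
      by (rule z(2))
  next
    case False
    then have "q z0 < norm y"
      using that by (simp add: C_def)
    moreover have "q z \<le> q z0"
      using z(2) \<open>z0 \<in> C\<close> .
    ultimately show ?thesis
      using assms(4)[OF that] by linarith
  qed
  moreover have "z \<in> S"
    using z(1) by (simp add: C_def)
  ultimately show ?thesis
    by blast
qed

definition partial_l1 :: "'n set \<Rightarrow> real^'n \<Rightarrow> real" where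
  "partial_l1 T x = (\<Sum>i\<in>T. \<bar>x $ i\<bar>)"

definition capped_l1 :: "real \<Rightarrow> real^'n \<Rightarrow> real" where
  "capped_l1 \<rho> x = (\<Sum>i\<in>UNIV. min 1 (\<rho> * \<bar>x $ i\<bar>))"

lemma partial_l1_attains_min_residual_ball:
  fixes A :: "real^'n^'m" and T :: "'n set"
  assumes "{x. norm (A *v x - b) \<le> \<delta>} \<noteq> {}"
  shows "\<exists>x\<in>{x. norm (A *v x - b) \<le> \<delta>}. \<forall>y\<in>{x. norm (A *v x - b) \<le> \<delta>}.
           partial_l1 T x \<le> partial_l1 T y"
proof -
  let ?K = "{x. norm (A *v x - b) \<le> \<delta>}"
  define P :: "real^'n \<Rightarrow> real^'n" where "P x = (\<chi> i. if i \<in> T then x $ i else 0)" for x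
  have partial_l1_P: "partial_l1 UNIV (P x) = partial_l1 T x" for x
    by (simp add: P_def partial_l1_def if_distrib sum.If_cases)
  have "linear P"
    by (rule linearI) (auto simp: P_def vec_eq_iff)
  moreover have "?K = (*v) A -` cball b \<delta>"
    by (auto simp: dist_norm norm_minus_commute)
  ultimately have "closed (P ` ?K)"
    using closed_linear_image_vimage_compact[OF _ matrix_vector_mul_linear compact_cball]
    by simp
  moreover have "continuous_on (P ` ?K) (partial_l1 UNIV)"
    unfolding partial_l1_def by (intro continuous_intros)
  moreover have "norm z \<le> partial_l1 UNIV z" for z
    unfolding partial_l1_def by (rule norm_le_l1_cart)
  ultimately obtain z where "z \<in> P ` ?K" "\<forall>y\<in>P ` ?K. partial_l1 UNIV z \<le> partial_l1 UNIV y"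
    using closed_attains_inf_coercive[of "P ` ?K" "partial_l1 UNIV"] assms by blast
  then show ?thesis
    by (auto simp: partial_l1_P)
qed

lemma capped_l1_le_partial_l1:
  "capped_l1 \<rho> x \<le> real (card (- T)) + \<rho> * partial_l1 T x"
proof -
  have "capped_l1 \<rho> x \<le> (\<Sum>i\<in>UNIV. if i \<in> T then \<rho> * \<bar>x $ i\<bar> else 1)"
    unfolding capped_l1_def by (rule sum_mono) auto
  also have "\<dots> = real (card (- T)) + \<rho> * partial_l1 T x"
    by (simp add: sum.If_cases partial_l1_def sum_distrib_left Compl_eq_Diff_UNIV)
  finally show ?thesis .
qed

lemma capped_l1_eq_partial_l1:
  "capped_l1 \<rho> x = real (card (- {i. \<rho> * \<bar>x $ i\<bar> < 1})) + \<rho> * partial_l1 {i. \<rho> * \<bar>x $ i\<bar> < 1} x"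
proof -
  have "capped_l1 \<rho> x = (\<Sum>i\<in>UNIV. if \<rho> * \<bar>x $ i\<bar> < 1 then \<rho> * \<bar>x $ i\<bar> else 1)"
    unfolding capped_l1_def by (rule sum.cong) auto
  also have "\<dots> = real (card (- {i. \<rho> * \<bar>x $ i\<bar> < 1})) + \<rho> * partial_l1 {i. \<rho> * \<bar>x $ i\<bar> < 1} x"
    by (simp add: sum.If_cases partial_l1_def sum_distrib_left Compl_eq_Diff_UNIV)
  finally show ?thesis .
qed

lemma capped_l1_attains_min:
  fixes K :: "(real^'n) set"
  assumes "\<rho> \<ge> 0" and partial_min: "\<And>T. \<exists>x\<in>K. \<forall>y\<in>K. partial_l1 T x \<le> partial_l1 T y"
  shows "\<exists>x\<in>K. \<forall>y\<in>K. capped_l1 \<rho> x \<le> capped_l1 \<rho> y"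
proof -
  obtain X where X: "\<And>T. X T \<in> K" "\<And>T y. y \<in> K \<Longrightarrow> partial_l1 T (X T) \<le> partial_l1 T y"
    using partial_min by metis
  define G where "G T = real (card (- T)) + \<rho> * partial_l1 T (X T)" for T
  have "Min (range G) \<in> range G"
    by (intro Min_in) auto
  then obtain T0 where "G T0 = Min (range G)"
    by (metis imageE)
  then have T0: "G T0 \<le> G T" for T
    by simp
  have "capped_l1 \<rho> (X T0) \<le> capped_l1 \<rho> y" if "y \<in> K" for y
  proof -
    let ?T = "{i. \<rho> * \<bar>y $ i\<bar> < 1}"
    have "capped_l1 \<rho> (X T0) \<le> G T0"
      unfolding G_def by (rule capped_l1_le_partial_l1)
    also have "\<dots> \<le> G ?T"
      by (rule T0)
    also have "\<dots> \<le> real (card (- ?T)) + \<rho> * partial_l1 ?T y"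
      unfolding G_def using X(2)[OF that] assms(1) by (simp add: mult_left_mono)
    also have "\<dots> = capped_l1 \<rho> y"
      by (rule capped_l1_eq_partial_l1[symmetric])
    finally show ?thesis .
  qed
  then show ?thesis
    using X(1) by blast
qed

lemma obj_eq_sum: "obj \<rho> x v = (\<Sum>i\<in>UNIV. 1 - v $ i + \<rho> * (v $ i * \<bar>x $ i\<bar>))"
  by (simp add: obj_def inner_vec_def sum.distrib sum_subtractf sum_distrib_left)

text \<open>Each summand of \<open>obj\<close> is the convex combination \<open>(1 - v\<^sub>i) \<cdot> 1 + v\<^sub>i \<cdot> \<rho> \<bar>x\<^sub>i\<bar>\<close>.\<close>
lemma capped_l1_le_obj:
  assumes "\<And>i. 0 \<le> v $ i \<and> v $ i \<le> 1"
  shows "capped_l1 \<rho> x \<le> obj \<rho> x v"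
  unfolding obj_eq_sum capped_l1_def
proof (rule sum_mono)
  fix i
  have "(1 - v $ i) * min 1 (\<rho> * \<bar>x $ i\<bar>) \<le> (1 - v $ i) * 1"
    using assms[of i] by (intro mult_left_mono) auto
  moreover have "v $ i * min 1 (\<rho> * \<bar>x $ i\<bar>) \<le> v $ i * (\<rho> * \<bar>x $ i\<bar>)"
    using assms[of i] by (intro mult_left_mono) auto
  ultimately show "min 1 (\<rho> * \<bar>x $ i\<bar>) \<le> 1 - v $ i + \<rho> * (v $ i * \<bar>x $ i\<bar>)"
    by (simp add: algebra_simps)
qed

lemma obj_indicator_eq_capped_l1:
  "obj \<rho> x (\<chi> i. if \<rho> * \<bar>x $ i\<bar> < 1 then 1 else 0) = capped_l1 \<rho> x"
  unfolding obj_eq_sum capped_l1_def by (rule sum.cong) auto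

theorem lemma3p1:
  fixes A :: "real^'n^'m" and b :: "real^'m" and \<delta> \<rho> :: real
  assumes "\<delta> \<ge> 0"
    and "{x. norm (A *v x - b) \<le> \<delta>} \<noteq> {}"
    and "\<rho> > 0"
  shows "{(x, v). feasible A b \<delta> x v \<and>
           (\<forall>y w. feasible A b \<delta> y w \<longrightarrow> obj \<rho> x v \<le> obj \<rho> y w)} \<noteq> {}"
proof -
  obtain x where x: "norm (A *v x - b) \<le> \<delta>"
    and x_min: "\<And>y. norm (A *v y - b) \<le> \<delta> \<Longrightarrow> capped_l1 \<rho> x \<le> capped_l1 \<rho> y"
    using capped_l1_attains_min[OF less_imp_le[OF assms(3)]
        partial_l1_attains_min_residual_ball[OF assms(2)]] by auto
  define v :: "real^'n" where "v = (\<chi> i. if \<rho> * \<bar>x $ i\<bar> < 1 then 1 else 0)"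
  have "feasible A b \<delta> x v"
    using x by (simp add: feasible_def v_def)
  moreover have "obj \<rho> x v \<le> obj \<rho> y w" if "feasible A b \<delta> y w" for y w
  proof -
    have "obj \<rho> x v = capped_l1 \<rho> x"
      unfolding v_def by (rule obj_indicator_eq_capped_l1)
    also have "\<dots> \<le> capped_l1 \<rho> y"
      using that by (simp add: feasible_def x_min)
    also have "\<dots> \<le> obj \<rho> y w"
      using that by (simp add: feasible_def capped_l1_le_obj)
    finally show ?thesis .
  qed
  ultimately show ?thesis
    by blast
qed

end
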